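(* Let $\mathcal{A}$ be a central and essential arrangement in $\mathbb{Q}^l$ as in the context, and let $p$ be a good prime for $\mathcal{A}$. Then $\mathcal{I}(\bar{\mathcal{A}})=\mathcal{I}(\bar{\mathcal{A}}_p)$ if and only if $\mathfrak{I}(\mathcal{A})=\mathfrak{I}(\mathcal{A}_p)$.
   Context: $\mathcal{A}=\{H_1,\dots,H_n\}$ is an arrangement of $n$ distinct, linearly ordered linear hyperplanes in $\mathbb{Q}^l$ (central) such that $\bigcap_i H_i=\{0\}$ (essential). For each $i$, $H_i=\{\alpha_i=0\}$ with $\alpha_i\in\mathbb{Z}[x_1,\dots,x_l]$ a nonzero homogeneous linear form whose coefficients are not all divisible by any prime; $Q(\mathcal{A})=\prod_i\alpha_i$. For a prime $p$, let $\pi_p:\mathbb{Z}[x_1,\dots,x_l]\to\mathbb{F}_p[x_1,\dots,x_l]$ be reduction mod $p$ and $(\alpha_i)_p=\pi_p(\alpha_i)$. $p$ is good for $\mathcal{A}$ if $\pi_p(Q(\mathcal{A}))$ is reduced, equivalently $(\alpha_i)_p$ and $(\alpha_j)_p$ are not scalar multiples of each other for all $i<j$. For good $p$, $\mathcal{A}_p=\{(H_1)_p,\dots,(H_n)_p\}$ is the arrangement in $\mathbb{F}_p^l$ with $(H_i)_p=\{(\alpha_i)_p=0\}$, in this order. For an arrangement $\mathcal{B}=\{G_1,\dots,G_n\}$ in $K^l$: its projectivization $\bar{\mathcal{B}}=\{\bar G_1,\dots,\bar G_{n+1}\}$ in $K\mathbb{P}^l$ consists of the projective closures $\bar G_i$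 ($i\le n$) and the hyperplane at infinity $\bar G_{n+1}$; $\mathcal{I}(\bar{\mathcal{B}})=\{(i_1,\dots,i_{l+1}) : 1\le i_1<\dots<i_{l+1}\le n+1,\ \bar G_{i_1}\cap\dots\cap\bar G_{i_{l+1}}\neq\emptyset\}$; and $\mathfrak{I}(\mathcal{B})=\{(i_1,\dots,i_l): 1\le i_1<\dots<i_l\le n,\ \dim(G_{i_1}\cap\dots\cap G_{i_l})=0\}$. *)

theory Defs
  imports "HOL-Computational_Algebra.Primes" "Berlekamp_Zassenhaus.Finite_Field"
begin

text \<open>An (affine) hyperplane in K^l is given by a pair (a, c) with a a coefficient
  function (coefficients a 1, ..., a l) and c a constant: G = {x. a.x = c}.\<close>

type_synonym 'k hyp = "(nat \<Rightarrow> 'k) \<times> 'k"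

definition vecs :: "nat \<Rightarrow> (nat \<Rightarrow> 'k::zero) set" where
  "vecs l = {x. \<forall>j. j \<notin> {1..l} \<longrightarrow> x j = 0}"

definition aff_hyp :: "nat \<Rightarrow> 'k::field hyp \<Rightarrow> (nat \<Rightarrow> 'k) set" where
  "aff_hyp l h = {x \<in> vecs l. (\<Sum>j=1..l. fst h j * x j) = snd h}"

text \<open>Projective space KP^l: points are represented by their nonzero homogeneous
  coordinate vectors (x 0 : x 1 : ... : x l); a projective hyperplane is represented by the
  (scaling-closed) set of nonzero homogeneous coordinate vectors of its points, so an
  intersection of projective hyperplanes is nonempty iff the intersection of these sets is.\<close>

definition hvecs :: "nat \<Rightarrow> (nat \<Rightarrow> 'k::zero) set" where
  "hvecs l = {x. (\<forall>j>l. x j = 0) \<and> (\<exists>j. x j \<noteq> 0)}"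

text \<open>Projective closure of {a.x = c}: its homogenization {a.x = c x_0}.\<close>
definition proj_closure :: "nat \<Rightarrow> 'k::field hyp \<Rightarrow> (nat \<Rightarrow> 'k) set" where
  "proj_closure l h = {x \<in> hvecs l. (\<Sum>j=1..l. fst h j * x j) = snd h * x 0}"

definition hyp_infinity :: "nat \<Rightarrow> (nat \<Rightarrow> 'k::field) set" where
  "hyp_infinity l = {x \<in> hvecs l. x 0 = 0}"

definition projectivization :: "nat \<Rightarrow> 'k::field hyp list \<Rightarrow> (nat \<Rightarrow> 'k) set list" where
  "projectivization l B = map (proj_closure l) B @ [hyp_infinity l]"

text \<open>Index tuples (i_1 < ... < i_m) are strictly increasing lists of 1-based indices.\<close>
definition I_proj :: "nat \<Rightarrow> 'k::field hyp list \<Rightarrow> nat list set" where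
  "I_proj l B = {is. length is = l + 1 \<and> sorted_wrt (<) is \<and> set is \<subseteq> {1..length B + 1} \<and>
      hvecs l \<inter> (\<Inter>i\<in>set is. projectivization l B ! (i - 1)) \<noteq> {}}"

text \<open>dim of an intersection of affine hyperplanes equals 0 iff it is a single point.\<close>
definition frakI :: "nat \<Rightarrow> 'k::field hyp list \<Rightarrow> nat list set" where
  "frakI l B = {is. length is = l \<and> sorted_wrt (<) is \<and> set is \<subseteq> {1..length B} \<and>
      (\<exists>x. vecs l \<inter> (\<Inter>i\<in>set is. aff_hyp l (B ! (i - 1))) = {x})}"

text \<open>The arrangement {alpha_i = 0} over a field K (coefficients mapped via of_int;
  for K = Q this is the inclusion, for K = F_p it is reduction mod p).\<close>
definition lin_arr :: "(nat \<Rightarrow> int) list \<Rightarrow> 'k::field hyp list" where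
  "lin_arr alphas = map (\<lambda>a. (\<lambda>j. of_int (a j), 0)) alphas"

end

theory Submission
  imports Defs
begin

text \<open>Index tuples avoiding the hyperplane at infinity
  always meet projectively, in the point (1 : 0 : ... : 0). A tuple containing it meets iff
  the remaining l linear hyperplanes share a nonzero point (a point at infinity), which is
  exactly the failure of their intersection to be the single point 0. So both index sets are governed by the same
  predicate on l-tuples, and agreement of one pair of sets is agreement of the other.\<close>

definition central :: "'k::zero hyp list \<Rightarrow> bool" where
  "central B \<longleftrightarrow> (\<forall>h\<in>set B. snd h = 0)"

definition common_nonzero_solution :: "nat \<Rightarrow> 'k::field hyp list \<Rightarrow> nat list \<Rightarrow> bool" where
  "common_nonzero_solution l B is \<longleftrightarrow>
     (\<exists>x\<in>vecs l. x \<noteq> (\<lambda>_. 0) \<and> (\<forall>i\<in>set is. x \<in> aff_hyp l (B ! (i - 1))))"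

lemma index_pred_less: "set is \<subseteq> {1..n} \<Longrightarrow> i \<in> set is \<Longrightarrow> i - 1 < (n::nat)"
  by force

lemma central_nth: "central B \<Longrightarrow> i < length B \<Longrightarrow> snd (B ! i) = 0"
  by (simp add: central_def)

lemma zero_in_aff_hyp: "snd h = 0 \<Longrightarrow> (\<lambda>_. 0) \<in> aff_hyp l h"
  by (simp add: aff_hyp_def vecs_def)

lemma central_lin_arr: "central (lin_arr alphas)"
  by (auto simp: central_def lin_arr_def)

lemma length_lin_arr [simp]: "length (lin_arr alphas) = length alphas"
  by (simp add: lin_arr_def)

lemma projectivization_nth_closure:
  "i < length B \<Longrightarrow> projectivization l B ! i = proj_closure l (B ! i)"
  by (simp add: projectivization_def nth_append)

lemma projectivization_nth_infinity: "projectivization l B ! length B = hyp_infinity l"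
  by (simp add: projectivization_def nth_append)

lemma vecs_apply_0: "x \<in> vecs l \<Longrightarrow> x 0 = 0"
  by (simp add: vecs_def)

lemma hyp_infinity_eq: "hyp_infinity l = vecs l - {\<lambda>_. 0}"
  by (force simp: hyp_infinity_def hvecs_def vecs_def not_less_eq_eq)

lemma hyp_infinity_subset_hvecs: "hyp_infinity l \<subseteq> hvecs l"
  by (auto simp: hyp_infinity_def)

lemma proj_closure_Int_hyp_infinity:
  "proj_closure l h \<inter> hyp_infinity l = aff_hyp l (fst h, 0) - {\<lambda>_. 0}"
  unfolding hyp_infinity_eq
  by (auto simp: proj_closure_def aff_hyp_def hvecs_def vecs_def dest: vecs_apply_0)

lemma ex_singleton_iff_no_other: "a \<in> S \<Longrightarrow> (\<exists>x. S = {x}) \<longleftrightarrow> (\<forall>x\<in>S. x = a)"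
  by auto

lemma frakI_central:
  assumes "central B"
  shows "frakI l B = {is. length is = l \<and> sorted_wrt (<) is \<and> set is \<subseteq> {1..length B} \<and>
      \<not> common_nonzero_solution l B is}"
proof -
  have point: "(\<exists>x. vecs l \<inter> (\<Inter>i\<in>set is. aff_hyp l (B ! (i - 1))) = {x}) \<longleftrightarrow>
      \<not> common_nonzero_solution l B is" if "set is \<subseteq> {1..length B}" for "is"
  proof -
    have "snd (B ! (i - 1)) = 0" if "i \<in> set is" for i
      using central_nth[OF assms index_pred_less] that \<open>set is \<subseteq> _\<close> by blast
    then have origin: "(\<lambda>_. 0) \<in> vecs l \<inter> (\<Inter>i\<in>set is. aff_hyp l (B ! (i - 1)))"
      by (auto simp: vecs_def intro: zero_in_aff_hyp)
    show ?thesis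
      unfolding ex_singleton_iff_no_other[OF origin] common_nonzero_solution_def by blast
  qed
  show ?thesis
    unfolding frakI_def by (rule Collect_cong) (use point in blast)
qed

lemma proj_closures_meet_off_infinity:
  assumes "central B" and "set js \<subseteq> {1..length B}"
  shows "hvecs l \<inter> (\<Inter>i\<in>set js. projectivization l B ! (i - 1)) \<noteq> {}"
proof -
  define e :: "nat \<Rightarrow> 'a" where "e = (\<lambda>j. if j = 0 then 1 else 0)"
  have "e \<in> hvecs l"
    by (auto simp: hvecs_def e_def)
  moreover have "e \<in> projectivization l B ! (i - 1)" if "i \<in> set js" for i
    using \<open>e \<in> hvecs l\<close> central_nth[OF assms(1) index_pred_less[OF assms(2) that]]
    unfolding projectivization_nth_closure[OF index_pred_less[OF assms(2) that]]
    by (simp add: proj_closure_def e_def)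
  ultimately show ?thesis
    by blast
qed

lemma proj_closures_meet_at_infinity_iff:
  assumes "central B" and "set bs \<subseteq> {1..length B}"
  shows "hvecs l \<inter> (\<Inter>i\<in>set (bs @ [length B + 1]). projectivization l B ! (i - 1)) \<noteq> {}
    \<longleftrightarrow> common_nonzero_solution l B bs"
proof -
  have at_infinity: "projectivization l B ! (i - 1) \<inter> hyp_infinity l = aff_hyp l (B ! (i - 1)) - {\<lambda>_. 0}"
    if "i \<in> set bs" for i
    using central_nth[OF assms(1) index_pred_less[OF assms(2) that]]
    unfolding projectivization_nth_closure[OF index_pred_less[OF assms(2) that]]
      proj_closure_Int_hyp_infinity
    by (metis prod.collapse)
  have "hvecs l \<inter> (\<Inter>i\<in>set (bs @ [length B + 1]). projectivization l B ! (i - 1))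
      = hyp_infinity l \<inter> (\<Inter>i\<in>set bs. projectivization l B ! (i - 1) \<inter> hyp_infinity l)"
    using hyp_infinity_subset_hvecs[of l] by (auto simp: projectivization_nth_infinity)
  also have "\<dots> = (vecs l - {\<lambda>_. 0}) \<inter> (\<Inter>i\<in>set bs. aff_hyp l (B ! (i - 1)))"
    using at_infinity by (auto simp: hyp_infinity_eq)
  finally show ?thesis
    unfolding common_nonzero_solution_def by blast
qed

lemma sorted_wrt_less_ends_with_max:
  fixes js :: "nat list"
  assumes sorted: "sorted_wrt (<) js" and range: "set js \<subseteq> {1..n + 1}" and max: "n + 1 \<in> set js"
  shows "\<exists>bs. js = bs @ [n + 1] \<and> sorted_wrt (<) bs \<and> set bs \<subseteq> {1..n}"
proof -
  have js: "js = butlast js @ [last js]"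
    using max by (metis append_butlast_last_id empty_iff list.set(1))
  then have below: "\<forall>i\<in>set (butlast js). i < last js"
    using sorted by (metis sorted_wrt_append list.set_intros(1))
  have "n + 1 \<in> set (butlast js) \<or> n + 1 = last js"
    using max js by (metis Un_iff empty_iff insert_iff set_append list.set)
  moreover have "last js \<le> n + 1"
    using range js by (metis atLeastAtMost_iff in_set_conv_decomp subsetD)
  ultimately have last: "last js = n + 1"
    using below by fastforce
  have "set (butlast js) \<subseteq> {1..n}"
    using below range last by (fastforce dest: in_set_butlastD)
  moreover have "sorted_wrt (<) (butlast js)"
    using sorted js by (metis sorted_wrt_append)
  ultimately show ?thesis
    using js last by metis
qed

lemma I_proj_central:
  assumes "central B"
  shows "I_proj l B = {js. length js = l + 1 \<and> sorted_wrt (<) js \<and> set js \<subseteq> {1..length B + 1} \<and>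
      (length B + 1 \<in> set js \<longrightarrow> common_nonzero_solution l B (butlast js))}"
proof -
  have meet: "hvecs l \<inter> (\<Inter>i\<in>set js. projectivization l B ! (i - 1)) \<noteq> {} \<longleftrightarrow>
      (length B + 1 \<in> set js \<longrightarrow> common_nonzero_solution l B (butlast js))"
    if sorted: "sorted_wrt (<) js" and range: "set js \<subseteq> {1..length B + 1}" for js
  proof (cases "length B + 1 \<in> set js")
    case True
    then obtain bs where "js = bs @ [length B + 1]" and "set bs \<subseteq> {1..length B}"
      using sorted_wrt_less_ends_with_max[OF sorted range] by blast
    then show ?thesis
      using proj_closures_meet_at_infinity_iff[OF assms, of bs l] by simp
  next
    case False
    then have "set js \<subseteq> {1..length B}"
      using range by (auto simp: subset_iff le_Suc_eq)
    with False show ?thesis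
      using proj_closures_meet_off_infinity[OF assms] by blast
  qed
  show ?thesis
    unfolding I_proj_def by (rule Collect_cong) (use meet in blast)
qed

lemma I_proj_eq_iff_frakI_eq:
  fixes B :: "'k::field hyp list" and B' :: "'k'::field hyp list"
  assumes central: "central B" "central B'" and same_length: "length B = length B'"
  shows "I_proj l B = I_proj l B' \<longleftrightarrow> frakI l B = frakI l B'"
proof -
  define tuples where "tuples = {is. length is = l \<and> sorted_wrt (<) is \<and> set is \<subseteq> {1..length B}}"
  let ?agree = "\<forall>is\<in>tuples. common_nonzero_solution l B is = common_nonzero_solution l B' is"
  have "frakI l B = frakI l B' \<longleftrightarrow> ?agree"
    unfolding frakI_central[OF central(1)] frakI_central[OF central(2)] tuples_def same_length
    by (auto simp: set_eq_iff)
  moreover have "I_proj l B = I_proj l B' \<longleftrightarrow> ?agree"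
  proof
    assume eq: "I_proj l B = I_proj l B'"
    show ?agree
    proof
      fix "is" assume "is \<in> tuples"
      then have "is @ [length B + 1] \<in> I_proj l B \<longleftrightarrow>
          common_nonzero_solution l B is" "is @ [length B + 1] \<in> I_proj l B' \<longleftrightarrow>
          common_nonzero_solution l B' is"
        unfolding I_proj_central[OF central(1)] I_proj_central[OF central(2)] tuples_def same_length
        by (auto simp: sorted_wrt_append)
      with eq show "common_nonzero_solution l B is = common_nonzero_solution l B' is"
        by simp
    qed
  next
    assume agree: ?agree
    have "common_nonzero_solution l B (butlast js) = common_nonzero_solution l B' (butlast js)"
      if length: "length js = l + 1" and tuple: "sorted_wrt (<) js" "set js \<subseteq> {1..length B + 1}"
        and infinity: "length B + 1 \<in> set js" for js
    proof -
      obtain bs where "js = bs @ [length B + 1]" "sorted_wrt (<) bs" "set bs \<subseteq> {1..length B}"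
        using sorted_wrt_less_ends_with_max[OF tuple infinity] by blast
      with length agree show ?thesis
        unfolding tuples_def by simp
    qed
    then show "I_proj l B = I_proj l B'"
      unfolding I_proj_central[OF central(1)] I_proj_central[OF central(2)] same_length
      by blast
  qed
  ultimately show ?thesis
    by simp
qed

theorem lemma4p3:
  fixes alphas :: "(nat \<Rightarrow> int) list" and l :: nat
    and p_type :: "'p::prime_card itself"
  assumes supp: "\<forall>a\<in>set alphas. \<forall>j. j \<notin> {1..l} \<longrightarrow> a j = 0"
    and nonzero: "\<forall>a\<in>set alphas. \<exists>j\<in>{1..l}. a j \<noteq> 0"
    and primitive: "\<forall>a\<in>set alphas. \<not> (\<exists>q::int. prime q \<and> (\<forall>j\<in>{1..l}. q dvd a j))"
    and distinct_hyps: "distinct (map (aff_hyp l) (lin_arr alphas :: rat hyp list))"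
    and essential: "vecs l \<inter> (\<Inter>h\<in>set (lin_arr alphas :: rat hyp list). aff_hyp l h) = {(\<lambda>_. 0)}"
    and good: "\<forall>i j. i < j \<and> j < length alphas \<longrightarrow>
        \<not> (\<exists>c::'p mod_ring. (\<lambda>k. of_int ((alphas ! i) k)) = (\<lambda>k. c * of_int ((alphas ! j) k))) \<and>
        \<not> (\<exists>c::'p mod_ring. (\<lambda>k. of_int ((alphas ! j) k)) = (\<lambda>k. c * of_int ((alphas ! i) k)))"
  shows "I_proj l (lin_arr alphas :: rat hyp list) = I_proj l (lin_arr alphas :: 'p mod_ring hyp list)
     \<longleftrightarrow> frakI l (lin_arr alphas :: rat hyp list) = frakI l (lin_arr alphas :: 'p mod_ring hyp list)"
  by (rule I_proj_eq_iff_frakI_eq) (simp_all add: central_lin_arr)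

end
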